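(* The generating function $F(x)=\sum_{n\ge0}f(n)x^n$ satisfies $$F(x)=\frac{B(x)-x}{(1-x)^2},$$ where $B(x)=\sum_{n\ge0}b(n)x^n$, and also $$F(x)=\frac{(1+x)^2}{1-x}F(x^2)-\frac{x(1-2x^2)}{(1-x)^2(1-x^2)}.$$
   Context: A partition $n=p_1+\cdots+p_k$ with $1\le p_1\le\cdots\le p_k$ is non-squashing if $p_1+\cdots+p_j\le p_{j+1}$ for all $1\le j\le k-1$; $b(n)$ is the number of non-squashing partitions of $n$ into distinct parts ($b(0)=1$). $f(n)$ is the number of (possibly empty) sets of distinct integers $1\le p_1<p_2<\cdots<p_k\le n$ satisfying $p_1+\cdots+p_j\le p_{j+1}$ for $1\le j\le k-1$. *)

theory Defs
  imports "HOL-Computational_Algebra.Formal_Power_Series"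
begin

definition non_squashing :: "nat list \<Rightarrow> bool" where
  "non_squashing ps \<longleftrightarrow>
     (\<forall>j. 1 \<le> j \<and> j < length ps \<longrightarrow> sum_list (take j ps) \<le> ps ! j)"

definition b :: "nat \<Rightarrow> nat" where
  "b n = card {ps. sorted_wrt (<) ps \<and> (\<forall>p\<in>set ps. 1 \<le> p) \<and>
                   sum_list ps = n \<and> non_squashing ps}"

definition f :: "nat \<Rightarrow> nat" where
  "f n = card {ps. sorted_wrt (<) ps \<and> set ps \<subseteq> {1..n} \<and> non_squashing ps}"

definition Fgf :: "real fps" where
  "Fgf = Abs_fps (\<lambda>n. real (f n))"

definition Bgf :: "real fps" where
  "Bgf = Abs_fps (\<lambda>n. real (b n))"

end

theory Submission
  imports Defs
begin

text \<open>Removing the largest part \<open>p\<close> of a non-squashing partition into distinct parts leaves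
  one of some \<open>m \<le> p\<close>, and conversely every such partition can be extended by \<open>p\<close>, except
  \<open>[p]\<close> itself. With \<open>S m = b 0 + \<dots> + b m\<close> this gives \<open>b n = S (n div 2) - [n even]\<close> for
  \<open>n \<ge> 1\<close> and, counting the sets with maximum \<open>n\<close>, \<open>f n - f (n - 1) = S n - 1\<close>. Since
  \<open>S(x) = B(x) / (1 - x)\<close>, these become \<open>(1 - x)\<^sup>2 F(x) = B(x) - x\<close> and
  \<open>(1 - x\<^sup>2) B(x) + x\<^sup>2 = (1 + x) B(x\<^sup>2)\<close>; substituting \<open>x\<^sup>2\<close> into the first and
  eliminating \<open>B\<close> gives the second identity.\<close>

unbundle fps_syntax

lemma unit_eq_div_diff_div:
  fixes a c d u v :: "'a::{idom_divide,algebraic_semidom}"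
  assumes "is_unit u" "is_unit v" "a * (u * v) = c * v - d"
  shows "a = c div u - d div (u * v)"
proof -
  have uv: "is_unit (u * v)"
    using assms(1,2) by (rule unit_prod)
  have "c div u * (u * v) = c * v"
    using assms(1) by (simp add: mult.assoc[symmetric])
  moreover have "d div (u * v) * (u * v) = d"
    using uv by simp
  ultimately have "(c div u - d div (u * v)) * (u * v) = c * v - d"
    by (simp add: left_diff_distrib)
  with assms(3) uv show ?thesis
    by (metis mult_right_cancel not_is_unit_0)
qed

definition nsd_partitions :: "nat list set" where
  "nsd_partitions = {ps. sorted_wrt (<) ps \<and> (\<forall>p\<in>set ps. 1 \<le> p) \<and> non_squashing ps}"

lemma non_squashing_snoc:
  "non_squashing (qs @ [p]) \<longleftrightarrow> non_squashing qs \<and> (qs \<noteq> [] \<longrightarrow> sum_list qs \<le> p)"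
  unfolding non_squashing_def
proof (intro iffI conjI allI impI)
  assume ns: "\<forall>j. 1 \<le> j \<and> j < length (qs @ [p]) \<longrightarrow> sum_list (take j (qs @ [p])) \<le> (qs @ [p]) ! j"
  show "sum_list (take j qs) \<le> qs ! j" if "1 \<le> j \<and> j < length qs" for j
    using ns[rule_format, of j] that by (simp add: nth_append)
  show "sum_list qs \<le> p" if "qs \<noteq> []"
    using ns[rule_format, of "length qs"] that by (cases qs) auto
next
  fix j
  assume "(\<forall>j. 1 \<le> j \<and> j < length qs \<longrightarrow> sum_list (take j qs) \<le> qs ! j) \<and> (qs \<noteq> [] \<longrightarrow> sum_list qs \<le> p)"
    and "1 \<le> j \<and> j < length (qs @ [p])"
  then show "sum_list (take j (qs @ [p])) \<le> (qs @ [p]) ! j"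
    by (cases "j < length qs") (auto simp: nth_append)
qed

lemma singleton_if_sum_list_le_member:
  fixes qs :: "nat list"
  assumes "\<forall>y\<in>set qs. 1 \<le> y" and "x \<in> set qs" and "sum_list qs \<le> x"
  shows "qs = [x]"
proof -
  obtain us vs where qs: "qs = us @ x # vs"
    using split_list[OF assms(2)] by blast
  then have "\<forall>y\<in>set us \<union> set vs. y = 0"
    using assms(3) by auto
  moreover have "\<forall>y\<in>set us \<union> set vs. 1 \<le> y"
    using assms(1) qs by auto
  ultimately have "us = [] \<and> vs = []"
    by (metis Un_iff ex_in_conv not_one_le_zero set_empty)
  with qs show ?thesis
    by simp
qed

text \<open>Distinctness of the parts is automatic, except for a repeated single part.\<close>
lemma snoc_in_nsd_partitions_iff:
  "qs @ [p] \<in> nsd_partitions \<longleftrightarrow> qs \<in> nsd_partitions \<and> 1 \<le> p \<and> sum_list qs \<le> p \<and> qs \<noteq> [p]"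
proof
  assume "qs @ [p] \<in> nsd_partitions"
  then show "qs \<in> nsd_partitions \<and> 1 \<le> p \<and> sum_list qs \<le> p \<and> qs \<noteq> [p]"
    unfolding nsd_partitions_def by (auto simp: sorted_wrt_append non_squashing_snoc)
next
  assume H: "qs \<in> nsd_partitions \<and> 1 \<le> p \<and> sum_list qs \<le> p \<and> qs \<noteq> [p]"
  then have pos: "\<forall>y\<in>set qs. 1 \<le> y"
    unfolding nsd_partitions_def by auto
  have "x < p" if "x \<in> set qs" for x
  proof -
    have "x \<le> p"
      using member_le_sum_list[OF that] H by linarith
    moreover have "x \<noteq> p"
      using singleton_if_sum_list_le_member[OF pos that] H by auto
    ultimately show ?thesis by simp
  qed
  then show "qs @ [p] \<in> nsd_partitions"
    using H unfolding nsd_partitions_def by (auto simp: sorted_wrt_append non_squashing_snoc)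
qed

lemma Nil_in_nsd_partitions [simp]: "[] \<in> nsd_partitions"
  by (simp add: nsd_partitions_def non_squashing_def)

lemma singleton_in_nsd_partitions_iff [simp]: "[p] \<in> nsd_partitions \<longleftrightarrow> 1 \<le> p"
  using snoc_in_nsd_partitions_iff[of "[]" p] by simp

lemma nsd_partitions_snoc_less: "qs @ [p] \<in> nsd_partitions \<Longrightarrow> x \<in> set qs \<Longrightarrow> x < p"
  by (simp add: nsd_partitions_def sorted_wrt_append)

lemma nsd_partitions_snoc_cases:
  assumes "ps \<in> nsd_partitions" "ps \<noteq> []"
  obtains qs p where "ps = qs @ [p]" "qs \<in> nsd_partitions" "1 \<le> p" "sum_list qs \<le> p" "qs \<noteq> [p]"
proof -
  obtain qs p where "ps = qs @ [p]"
    using assms(2) by (cases ps rule: rev_cases) auto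
  then show ?thesis
    using that assms(1) by (simp add: snoc_in_nsd_partitions_iff)
qed

lemma nsd_partition_eq_Nil_iff: "ps \<in> nsd_partitions \<Longrightarrow> ps = [] \<longleftrightarrow> sum_list ps = 0"
  unfolding nsd_partitions_def by (cases ps) auto

lemma finite_nsd_partitions_subset: "finite A \<Longrightarrow> finite {ps \<in> nsd_partitions. set ps \<subseteq> A}"
  by (rule finite_subset[OF _ finite_subset_distinct]) (auto simp: nsd_partitions_def strict_sorted_iff)

lemma finite_nsd_partitions_sum_le: "finite {ps \<in> nsd_partitions. sum_list ps \<le> m}"
  by (rule finite_subset[OF _ finite_nsd_partitions_subset[of "{..m}"]])
    (auto intro: order_trans[OF member_le_sum_list])

lemma b_eq_card: "b n = card {ps \<in> nsd_partitions. sum_list ps = n}"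
  unfolding b_def nsd_partitions_def by (rule arg_cong[where f = card]) auto

lemma card_nsd_partitions_sum_le: "card {ps \<in> nsd_partitions. sum_list ps \<le> m} = (\<Sum>i\<le>m. b i)"
proof -
  let ?A = "\<lambda>i. {ps \<in> nsd_partitions. sum_list ps = i}"
  have "{ps \<in> nsd_partitions. sum_list ps \<le> m} = (\<Union>i\<le>m. ?A i)"
    by auto
  also have "card \<dots> = (\<Sum>i\<le>m. card (?A i))"
    by (rule card_UN_disjoint) (auto intro: finite_subset[OF _ finite_nsd_partitions_sum_le])
  finally show ?thesis
    by (simp add: b_eq_card)
qed

lemma b_0: "b 0 = 1"
proof -
  have "{ps \<in> nsd_partitions. sum_list ps = 0} = {[]}"
    using nsd_partition_eq_Nil_iff by auto
  then show ?thesis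
    by (simp add: b_eq_card)
qed

lemma b_recurrence:
  assumes "1 \<le> n"
  shows "b n + (if even n then 1 else 0) = (\<Sum>i\<le>n div 2. b i)"
proof -
  let ?A = "{qs \<in> nsd_partitions. sum_list qs \<le> n div 2}"
  let ?h = "n - n div 2"
  let ?snoc = "\<lambda>qs. qs @ [n - sum_list qs]"
  have "{ps \<in> nsd_partitions. sum_list ps = n} = ?snoc ` (?A - {[?h]})"
  proof (intro equalityI subsetI)
    fix ps
    assume "ps \<in> {ps \<in> nsd_partitions. sum_list ps = n}"
    then have ps: "ps \<in> nsd_partitions" "sum_list ps = n"
      by auto
    moreover have "ps \<noteq> []"
      using ps(2) assms by auto
    ultimately obtain qs p where qs: "ps = qs @ [p]" "qs \<in> nsd_partitions" "sum_list qs \<le> p" "qs \<noteq> [p]"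
      by (blast elim: nsd_partitions_snoc_cases)
    then have p: "sum_list qs + p = n"
      using ps(2) by simp
    have "qs \<noteq> [?h]"
    proof
      assume "qs = [?h]"
      with p qs(3) have "p = ?h"
        by simp
      with \<open>qs = [?h]\<close> qs(4) show False
        by simp
    qed
    moreover have "sum_list qs \<le> n div 2" "p = n - sum_list qs"
      using p qs(3) by linarith+
    ultimately show "ps \<in> ?snoc ` (?A - {[?h]})"
      using qs(1,2) by blast
  next
    fix ps
    assume "ps \<in> ?snoc ` (?A - {[?h]})"
    then obtain qs where qs: "qs \<in> nsd_partitions" "sum_list qs \<le> n div 2" "qs \<noteq> [?h]"
      and ps: "ps = ?snoc qs"
      by auto
    obtain p where p: "p = n - sum_list qs" "sum_list qs + p = n" "1 \<le> p" "sum_list qs \<le> p"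
      using qs(2) assms by fastforce
    have "qs \<noteq> [p]"
      using qs(3) p(2) by auto
    then have "qs @ [p] \<in> nsd_partitions"
      using qs(1) p(3,4) by (simp add: snoc_in_nsd_partitions_iff)
    then show "ps \<in> {ps \<in> nsd_partitions. sum_list ps = n}"
      using ps p(1,2) by simp
  qed
  moreover have "inj_on ?snoc (?A - {[?h]})"
    by (rule inj_onI) simp
  ultimately have "b n = card (?A - {[?h]})"
    by (simp add: b_eq_card card_image)
  moreover have "[?h] \<in> ?A \<longleftrightarrow> even n"
    using assms by simp presburger
  moreover have "card ?A > 0"
    using finite_nsd_partitions_sum_le card_gt_0_iff[of ?A] Nil_in_nsd_partitions by fastforce
  ultimately show ?thesis
    by (simp add: card_Diff_singleton_if finite_nsd_partitions_sum_le card_nsd_partitions_sum_le)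
qed

lemma f_eq_card: "f n = card {ps \<in> nsd_partitions. set ps \<subseteq> {..n}}"
  unfolding f_def nsd_partitions_def by (rule arg_cong[where f = card]) auto

lemma f_0: "f 0 = 1"
proof -
  have "ps = []" if "ps \<in> nsd_partitions" "set ps \<subseteq> {..0}" for ps
    using that by (cases ps) (auto simp: nsd_partitions_def)
  then have "{ps \<in> nsd_partitions. set ps \<subseteq> {..0}} = {[]}"
    by auto
  then show ?thesis
    by (simp add: f_eq_card)
qed

lemma f_recurrence: "f (Suc n) + 1 = f n + (\<Sum>i\<le>Suc n. b i)"
proof -
  let ?A = "{qs \<in> nsd_partitions. sum_list qs \<le> Suc n}"
  let ?F = "\<lambda>m. {ps \<in> nsd_partitions. set ps \<subseteq> {..m}}"
  let ?snoc = "\<lambda>qs. qs @ [Suc n]"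
  have "?F (Suc n) = ?F n \<union> ?snoc ` (?A - {[Suc n]})"
  proof (intro equalityI subsetI)
    fix ps
    assume ps: "ps \<in> ?F (Suc n)"
    show "ps \<in> ?F n \<union> ?snoc ` (?A - {[Suc n]})"
    proof (cases "Suc n \<in> set ps")
      case False
      with ps have "ps \<in> ?F n"
        by (auto simp: le_Suc_eq)
      then show ?thesis ..
    next
      case True
      then have "ps \<noteq> []"
        by auto
      then obtain qs p where qs: "ps = qs @ [p]" "qs \<in> nsd_partitions" "sum_list qs \<le> p" "qs \<noteq> [p]"
        using ps by (blast elim: nsd_partitions_snoc_cases)
      have "p \<le> Suc n"
        using ps qs(1) by auto
      moreover have "Suc n \<le> p"
        using True nsd_partitions_snoc_less[of qs p "Suc n"] ps qs(1) by auto
      ultimately have "p = Suc n"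
        by simp
      then show ?thesis
        using qs by auto
    qed
  next
    fix ps
    assume "ps \<in> ?F n \<union> ?snoc ` (?A - {[Suc n]})"
    then show "ps \<in> ?F (Suc n)"
      by (auto simp: snoc_in_nsd_partitions_iff intro: order_trans[OF member_le_sum_list])
  qed
  moreover have "?F n \<inter> ?snoc ` (?A - {[Suc n]}) = {}"
    by auto
  moreover have "inj_on ?snoc (?A - {[Suc n]})"
    by (rule inj_onI) simp
  moreover have "card ?A = card (?A - {[Suc n]}) + 1"
    using card_Suc_Diff1[OF finite_nsd_partitions_sum_le, of "[Suc n]"] by simp
  ultimately have "card (?F (Suc n)) + 1 = card (?F n) + card ?A"
    using finite_nsd_partitions_subset[of "{..n}"] finite_nsd_partitions_sum_le[of "Suc n"]
    by (simp add: card_Un_disjoint card_image)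
  then show ?thesis
    by (simp add: f_eq_card card_nsd_partitions_sum_le)
qed

lemma fps_one_minus_X_mult_nth:
  fixes A :: "'a::comm_ring_1 fps"
  shows "((1 - fps_X) * A) $ n = (if n = 0 then A $ 0 else A $ n - A $ (n - 1))"
  by (simp add: left_diff_distrib)

lemma fps_one_minus_X_mult_ones: "(1 - fps_X) * Abs_fps (\<lambda>_. 1) = (1 :: 'a::comm_ring_1 fps)"
  by (rule fps_ext) (simp add: fps_one_minus_X_mult_nth)

lemma fps_compose_X_squared_nth:
  fixes A :: "'a::comm_ring_1 fps"
  shows "(A oo fps_X^2) $ n = (if even n then A $ (n div 2) else 0)"
proof -
  have "(A oo fps_X^2) $ n = (\<Sum>i=0..n. if i = n div 2 \<and> even n then A $ i else 0)"
    by (auto simp: fps_compose_nth power_mult[symmetric] intro: sum.cong)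
  then show ?thesis
    by (simp add: sum.delta')
qed

lemma fps_one_plus_X_mult_compose_X_squared_nth:
  fixes A :: "'a::comm_ring_1 fps"
  shows "((1 + fps_X) * (A oo fps_X^2)) $ n = A $ (n div 2)"
  by (cases n) (auto simp: distrib_right fps_compose_X_squared_nth)

lemma fps_compose_X_squared_mult:
  fixes A :: "'a::idom fps"
  shows "((1 - fps_X)^k * A) oo fps_X^2 = (1 - fps_X^2)^k * (A oo fps_X^2)"
  by (simp add: fps_compose_mult_distrib fps_compose_power[symmetric] fps_compose_sub_distrib)

lemma Bgf_eq_one_minus_X_mult_partial_sums: "Bgf = (1 - fps_X) * Abs_fps (\<lambda>n. \<Sum>i\<le>n. real (b i))"
  using fps_divide_fps_X_minus1_sum_lemma[of Bgf] by (simp add: Bgf_def atLeast0AtMost)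

lemma Fgf_Bgf_relation: "(1 - fps_X)^2 * Fgf = Bgf - fps_X"
proof -
  let ?P = "Abs_fps (\<lambda>n. \<Sum>i\<le>n. real (b i))"
  let ?ones = "Abs_fps (\<lambda>_. 1) :: real fps"
  have "(1 - fps_X)^2 * Fgf = (1 - fps_X) * ((1 - fps_X) * Fgf)"
    by (simp add: power2_eq_square mult.assoc)
  also have "(1 - fps_X) * Fgf = ?P - fps_X * ?ones"
  proof (rule fps_ext)
    fix n
    have "real (f (Suc m)) + 1 = real (f m) + (\<Sum>i\<le>Suc m. real (b i))" for m
      using of_nat_eq_iff[where 'a = real, THEN iffD2, OF f_recurrence[of m]] by (simp add: add_ac)
    then show "((1 - fps_X) * Fgf) $ n = (?P - fps_X * ?ones) $ n"
      by (cases n) (simp_all add: fps_one_minus_X_mult_nth Fgf_def f_0 b_0 algebra_simps)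
  qed
  also have "(1 - fps_X) * (?P - fps_X * ?ones) = (1 - fps_X) * ?P - fps_X * ((1 - fps_X) * ?ones)"
    by (simp add: algebra_simps)
  finally show ?thesis
    by (simp add: fps_one_minus_X_mult_ones flip: Bgf_eq_one_minus_X_mult_partial_sums)
qed

lemma Bgf_functional_equation: "(1 - fps_X^2) * Bgf + fps_X^2 = (1 + fps_X) * (Bgf oo fps_X^2)"
proof -
  let ?P = "Abs_fps (\<lambda>n. \<Sum>i\<le>n. real (b i))"
  let ?ones = "Abs_fps (\<lambda>_. 1) :: real fps"
  have "(1 + fps_X) * (?P oo fps_X^2) + 1 = Bgf + (?ones oo fps_X^2)"
  proof (rule fps_ext)
    fix n
    have "real (b n) + (if even n then 1 else 0) = (\<Sum>i\<le>n div 2. real (b i))" if "n \<noteq> 0"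
      using of_nat_eq_iff[where 'a = real, THEN iffD2, OF b_recurrence[of n]] that
      by (cases "even n") simp_all
    then show "((1 + fps_X) * (?P oo fps_X^2) + 1) $ n = (Bgf + (?ones oo fps_X^2)) $ n"
      by (cases "n = 0") (auto simp: fps_one_plus_X_mult_compose_X_squared_nth fps_compose_X_squared_nth Bgf_def)
  qed
  then have "(1 - fps_X^2) * ((1 + fps_X) * (?P oo fps_X^2) + 1) = (1 - fps_X^2) * (Bgf + (?ones oo fps_X^2))"
    by simp
  moreover have "(1 - fps_X^2) * (?P oo fps_X^2) = Bgf oo fps_X^2"
    using fps_compose_X_squared_mult[of 1 ?P] by (simp add: Bgf_eq_one_minus_X_mult_partial_sums)
  moreover have "(1 - fps_X^2) * (?ones oo fps_X^2) = 1"
    using fps_compose_X_squared_mult[of 1 ?ones] by (simp add: fps_one_minus_X_mult_ones)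
  ultimately show ?thesis
    by algebra
qed

theorem corollary7:
  shows "Fgf = (Bgf - fps_X) / (1 - fps_X)^2 \<and>
         Fgf = (1 + fps_X)^2 / (1 - fps_X) * (Fgf oo fps_X^2)
              - fps_X * (1 - 2 * fps_X^2) / ((1 - fps_X)^2 * (1 - fps_X^2))"
proof
  let ?X = "fps_X :: real fps"
  have units: "is_unit (1 - ?X)" "is_unit (1 - ?X^2)"
    by simp_all
  show "Fgf = (Bgf - ?X) / (1 - ?X)^2"
    using units Fgf_Bgf_relation by (subst unit_eq_div2) (simp_all add: mult.commute)
  have "(1 - ?X^2)^2 * (Fgf oo ?X^2) = (Bgf oo ?X^2) - ?X^2"
    using arg_cong[OF Fgf_Bgf_relation, of "\<lambda>A. A oo ?X^2"]
    by (simp add: fps_compose_X_squared_mult fps_compose_sub_distrib)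
  then have "Fgf * ((1 - ?X) * ((1 - ?X) * (1 - ?X^2)))
      = (1 + ?X)^2 * (Fgf oo ?X^2) * ((1 - ?X) * (1 - ?X^2)) - ?X * (1 - 2 * ?X^2)"
    using Fgf_Bgf_relation Bgf_functional_equation by algebra
  then have "Fgf = (1 + ?X)^2 * (Fgf oo ?X^2) / (1 - ?X)
      - ?X * (1 - 2 * ?X^2) / ((1 - ?X) * ((1 - ?X) * (1 - ?X^2)))"
    using units by (intro unit_eq_div_diff_div unit_prod)
  then show "Fgf = (1 + ?X)^2 / (1 - ?X) * (Fgf oo ?X^2)
      - ?X * (1 - 2 * ?X^2) / ((1 - ?X)^2 * (1 - ?X^2))"
    using units(1) by (simp add: unit_div_commute power2_eq_square mult.assoc)
qed

end
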